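(* Let $G_1=(V_1,E_1)$ and $G_2=(V_2,E_2)$ be finite simple directed graphs with real costs $c(i\to k)$, $c(ij\to kl)$, $c(i\to\epsilon)$, $c(ij\to\epsilon)$, $c(\epsilon\to k)$, $c(\epsilon\to kl)$ for $i\in V_1$, $k\in V_2$, $ij\in E_1$, $kl\in E_2$. Define program (F1): minimize $$\sum_{i\in V_1}\sum_{k\in V_2}c(i\to k)x_{i,k}+\sum_{ij\in E_1}\sum_{kl\in E_2}c(ij\to kl)y_{ij,kl}+\sum_{i\in V_1}c(i\to\epsilon)u_i+\sum_{k\in V_2}c(\epsilon\to k)v_k+\sum_{ij\in E_1}c(ij\to\epsilon)e_{ij}+\sum_{kl\in E_2}c(\epsilon\to kl)f_{kl}$$ over binary $\mathbf{x},\mathbf{y},\mathbf{u},\mathbf{v},\mathbf{e},\mathbf{f}$ subject to: $u_i+\sum_{k\in V_2}x_{i,k}=1$ ($\forall i\in V_1$); $v_k+\sum_{i\in V_1}x_{i,k}=1$ ($\forall k\in V_2$); $e_{ij}+\sum_{kl\in E_2}y_{ij,kl}=1$ ($\forall ij\in E_1$); $f_{kl}+\sum_{ij\in E_1}y_{ij,kl}=1$ ($\forall kl\in E_2$); $y_{ij,kl}\le x_{i,k}$ and $y_{ij,kl}\le x_{j,l}$ ($\forall (ij,kl)\in E_1\times E_2$). Define program (F2): minimize $$\sum_{i\in V_1}\sum_{k\in V_2}\bigl(c(i\to k)-c(i\to\epsilon)-c(\epsilon\to k)\bigr)x_{i,k}+\sum_{ij\in E_1}\sum_{kl\in E_2}\bigl(c(ij\to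 kl)-c(ij\to\epsilon)-c(\epsilon\to kl)\bigr)y_{ij,kl}+C,$$ with $C=\sum_{i\in V_1}c(i\to\epsilon)+\sum_{k\in V_2}c(\epsilon\to k)+\sum_{ij\in E_1}c(ij\to\epsilon)+\sum_{kl\in E_2}c(\epsilon\to kl)$, over binary $\mathbf{x},\mathbf{y}$ subject to: $\sum_{k\in V_2}x_{i,k}\le1$ ($\forall i\in V_1$); $\sum_{i\in V_1}x_{i,k}\le 1$ ($\forall k\in V_2$); $\sum_{l\in V_2:\,kl\in E_2}y_{ij,kl}\le x_{i,k}$ ($\forall k\in V_2,\ \forall ij\in E_1$); $\sum_{k\in V_2:\,kl\in E_2}y_{ij,kl}\le x_{j,l}$ ($\forall l\in V_2,\ \forall ij\in E_1$). Then the map $(\mathbf{x},\mathbf{y},\mathbf{u},\mathbf{v},\mathbf{e},\mathbf{f})\mapsto(\mathbf{x},\mathbf{y})$ is a bijection from the feasible set of (F1) onto the feasible set of (F2), it preserves the objective value, and consequently (F1) and (F2) have the same optimal value.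
   Context: All variables $x_{i,k},y_{ij,kl},u_i,v_k,e_{ij},f_{kl}$ take values in $\{0,1\}$. Edges of a simple directed graph are ordered pairs of distinct vertices, written $ij$ for $(i,j)$. The optimal value of (F1) is the graph edit distance between $G_1$ and $G_2$ under the given costs. *)

theory Defs
  imports Complex_Main
begin

definition simple_digraph :: "'v set \<Rightarrow> ('v \<times> 'v) set \<Rightarrow> bool" where
  "simple_digraph V E \<longleftrightarrow> finite V \<and> E \<subseteq> V \<times> V \<and> (\<forall>(i,j)\<in>E. i \<noteq> j)"

(* Variable vectors are functions; outside their index set they are fixed to 0
   (so that a vector is determined by its entries on the index set). *)
definition binvec :: "'i set \<Rightarrow> ('i \<Rightarrow> real) \<Rightarrow> bool" where
  "binvec I z \<longleftrightarrow> (\<forall>t\<in>I. z t \<in> {0,1}) \<and> (\<forall>t. t \<notin> I \<longrightarrow> z t = 0)"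

definition binvec2 :: "'i set \<Rightarrow> 'j set \<Rightarrow> ('i \<Rightarrow> 'j \<Rightarrow> real) \<Rightarrow> bool" where
  "binvec2 I J z \<longleftrightarrow> (\<forall>s\<in>I. \<forall>t\<in>J. z s t \<in> {0,1})
      \<and> (\<forall>s t. \<not> (s \<in> I \<and> t \<in> J) \<longrightarrow> z s t = 0)"

type_synonym ('a,'b) F1sol =
  "('a \<Rightarrow> 'b \<Rightarrow> real) \<times> ('a \<times> 'a \<Rightarrow> 'b \<times> 'b \<Rightarrow> real) \<times> ('a \<Rightarrow> real) \<times> ('b \<Rightarrow> real)
   \<times> ('a \<times> 'a \<Rightarrow> real) \<times> ('b \<times> 'b \<Rightarrow> real)"

type_synonym ('a,'b) F2sol =
  "('a \<Rightarrow> 'b \<Rightarrow> real) \<times> ('a \<times> 'a \<Rightarrow> 'b \<times> 'b \<Rightarrow> real)"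

definition F1_feasible ::
  "'a set \<Rightarrow> ('a \<times> 'a) set \<Rightarrow> 'b set \<Rightarrow> ('b \<times> 'b) set \<Rightarrow> ('a,'b) F1sol set" where
  "F1_feasible V1 E1 V2 E2 = {(x,y,u,v,e,f).
      binvec2 V1 V2 x \<and> binvec2 E1 E2 y \<and> binvec V1 u \<and> binvec V2 v \<and> binvec E1 e \<and> binvec E2 f
    \<and> (\<forall>i\<in>V1. u i + (\<Sum>k\<in>V2. x i k) = 1)
    \<and> (\<forall>k\<in>V2. v k + (\<Sum>i\<in>V1. x i k) = 1)
    \<and> (\<forall>ij\<in>E1. e ij + (\<Sum>kl\<in>E2. y ij kl) = 1)
    \<and> (\<forall>kl\<in>E2. f kl + (\<Sum>ij\<in>E1. y ij kl) = 1)
    \<and> (\<forall>(i,j)\<in>E1. \<forall>(k,l)\<in>E2. y (i,j) (k,l) \<le> x i k \<and> y (i,j) (k,l) \<le> x j l)}"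

definition F2_feasible ::
  "'a set \<Rightarrow> ('a \<times> 'a) set \<Rightarrow> 'b set \<Rightarrow> ('b \<times> 'b) set \<Rightarrow> ('a,'b) F2sol set" where
  "F2_feasible V1 E1 V2 E2 = {(x,y).
      binvec2 V1 V2 x \<and> binvec2 E1 E2 y
    \<and> (\<forall>i\<in>V1. (\<Sum>k\<in>V2. x i k) \<le> 1)
    \<and> (\<forall>k\<in>V2. (\<Sum>i\<in>V1. x i k) \<le> 1)
    \<and> (\<forall>k\<in>V2. \<forall>(i,j)\<in>E1. (\<Sum>l\<in>{l\<in>V2. (k,l)\<in>E2}. y (i,j) (k,l)) \<le> x i k)
    \<and> (\<forall>l\<in>V2. \<forall>(i,j)\<in>E1. (\<Sum>k\<in>{k\<in>V2. (k,l)\<in>E2}. y (i,j) (k,l)) \<le> x j l)}"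

(* Costs: cs = substitution of vertices, ce = substitution of edges,
   dv/de = deletion of a vertex/edge of G1, iv/ie = insertion of a vertex/edge of G2. *)
definition F1_obj ::
  "'a set \<Rightarrow> ('a \<times> 'a) set \<Rightarrow> 'b set \<Rightarrow> ('b \<times> 'b) set
   \<Rightarrow> ('a \<Rightarrow> 'b \<Rightarrow> real) \<Rightarrow> ('a \<times> 'a \<Rightarrow> 'b \<times> 'b \<Rightarrow> real)
   \<Rightarrow> ('a \<Rightarrow> real) \<Rightarrow> ('b \<Rightarrow> real) \<Rightarrow> ('a \<times> 'a \<Rightarrow> real) \<Rightarrow> ('b \<times> 'b \<Rightarrow> real)
   \<Rightarrow> ('a,'b) F1sol \<Rightarrow> real" where
  "F1_obj V1 E1 V2 E2 cs ce dv iv de ie = (\<lambda>(x,y,u,v,e,f).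
      (\<Sum>i\<in>V1. \<Sum>k\<in>V2. cs i k * x i k) + (\<Sum>ij\<in>E1. \<Sum>kl\<in>E2. ce ij kl * y ij kl)
    + (\<Sum>i\<in>V1. dv i * u i) + (\<Sum>k\<in>V2. iv k * v k)
    + (\<Sum>ij\<in>E1. de ij * e ij) + (\<Sum>kl\<in>E2. ie kl * f kl))"

definition F2_obj ::
  "'a set \<Rightarrow> ('a \<times> 'a) set \<Rightarrow> 'b set \<Rightarrow> ('b \<times> 'b) set
   \<Rightarrow> ('a \<Rightarrow> 'b \<Rightarrow> real) \<Rightarrow> ('a \<times> 'a \<Rightarrow> 'b \<times> 'b \<Rightarrow> real)
   \<Rightarrow> ('a \<Rightarrow> real) \<Rightarrow> ('b \<Rightarrow> real) \<Rightarrow> ('a \<times> 'a \<Rightarrow> real) \<Rightarrow> ('b \<times> 'b \<Rightarrow> real)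
   \<Rightarrow> ('a,'b) F2sol \<Rightarrow> real" where
  "F2_obj V1 E1 V2 E2 cs ce dv iv de ie = (\<lambda>(x,y).
      (\<Sum>i\<in>V1. \<Sum>k\<in>V2. (cs i k - dv i - iv k) * x i k)
    + (\<Sum>ij\<in>E1. \<Sum>kl\<in>E2. (ce ij kl - de ij - ie kl) * y ij kl)
    + ((\<Sum>i\<in>V1. dv i) + (\<Sum>k\<in>V2. iv k) + (\<Sum>ij\<in>E1. de ij) + (\<Sum>kl\<in>E2. ie kl)))"

definition proj12 :: "('a,'b) F1sol \<Rightarrow> ('a,'b) F2sol" where
  "proj12 = (\<lambda>(x,y,u,v,e,f). (x,y))"

end

theory Submission
  imports Defs
begin

text \<open>The slack variables \<open>u, v, e, f\<close> of (F1) are forced by its equality constraints to be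
  one minus the corresponding row or column sums, so dropping them loses no information, and
  substituting them into the objective of (F1) gives the objective of (F2). The inequalities of (F2)
  say exactly that these slacks are again binary: an edge \<open>ij\<close> can be matched along \<open>kl\<close> only if
  \<open>i \<mapsto> k\<close> and \<open>j \<mapsto> l\<close>, so the edges of \<open>G\<^sub>1\<close> matched to \<open>kl\<close> are bounded by
  \<open>(\<Sum>\<^sub>i x\<^sub>i\<^sub>k)(\<Sum>\<^sub>j x\<^sub>j\<^sub>l) \<le> 1\<close>, and those matched from \<open>ij\<close> by \<open>\<Sum>\<^sub>k x\<^sub>i\<^sub>k \<le> 1\<close>.\<close>

lemma sum_binary_le_one_in_01:
  fixes z :: "'i \<Rightarrow> real"
  assumes "finite I" "\<forall>t\<in>I. z t \<in> {0,1}" "sum z I \<le> 1"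
  shows "sum z I \<in> {0,1}"
proof (cases "\<exists>a\<in>I. z a = 1")
  case True
  then obtain a where "a \<in> I" "z a = 1" by blast
  with assms(1,2) have "1 \<le> sum z I" using member_le_sum[of a I z] by fastforce
  with assms(3) show ?thesis by simp
next
  case False
  with assms(2) show ?thesis by simp
qed

lemma sum_le_binary_bound:
  fixes z :: "'i \<Rightarrow> real"
  assumes "c \<in> {0,1}" "\<forall>t\<in>I. z t \<le> c" "sum z I \<le> 1"
  shows "sum z I \<le> c"
  using assms sum_nonpos[of I z] by auto

lemma sum_reindex_le:
  fixes g :: "'j \<Rightarrow> real"
  assumes "finite E" "inj_on h A" "h ` A \<subseteq> E" "\<forall>t\<in>E. g t \<ge> 0"
  shows "(\<Sum>a\<in>A. g (h a)) \<le> sum g E"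
proof -
  have "(\<Sum>a\<in>A. g (h a)) = sum g (h ` A)" using assms(2) by (simp add: sum.reindex)
  also have "\<dots> \<le> sum g E" using assms by (intro sum_mono2) auto
  finally show ?thesis .
qed

lemma sum_edges_by_tail:
  assumes "finite V" "E \<subseteq> V \<times> V"
  shows "sum g E = (\<Sum>k\<in>V. \<Sum>l\<in>{l\<in>V. (k,l)\<in>E}. g (k,l))"
proof -
  have "E = Sigma V (\<lambda>k. {l\<in>V. (k,l)\<in>E})" using assms(2) by auto
  then show ?thesis using assms(1) by (simp add: sum.Sigma)
qed

lemma sum_edges_product_le:
  fixes a b :: "'v \<Rightarrow> real"
  assumes "finite V" "E \<subseteq> V \<times> V" "\<forall>i\<in>V. a i \<ge> 0" "\<forall>j\<in>V. b j \<ge> 0"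
  shows "(\<Sum>(i,j)\<in>E. a i * b j) \<le> sum a V * sum b V"
proof -
  have "(\<Sum>(i,j)\<in>E. a i * b j) \<le> (\<Sum>(i,j)\<in>V \<times> V. a i * b j)"
    using assms by (intro sum_mono2) (auto intro: mult_nonneg_nonneg)
  also have "\<dots> = sum a V * sum b V" by (simp add: sum_product sum.cartesian_product)
  finally show ?thesis .
qed

lemma binvec2_nonneg: "binvec2 I J z \<Longrightarrow> z s t \<ge> 0"
  unfolding binvec2_def by (metis empty_iff insert_iff order_refl zero_le_one)

definition slack :: "'i set \<Rightarrow> ('i \<Rightarrow> real) \<Rightarrow> 'i \<Rightarrow> real" where
  "slack I s = (\<lambda>t. if t \<in> I then 1 - s t else 0)"

lemma binvec_slack: "\<forall>t\<in>I. s t \<in> {0,1} \<Longrightarrow> binvec I (slack I s)"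
  by (auto simp: binvec_def slack_def)

lemma slack_unique: "binvec I w \<Longrightarrow> \<forall>t\<in>I. w t + s t = 1 \<Longrightarrow> slack I s = w"
  by (force simp: binvec_def slack_def)

definition add_slacks ::
  "'a set \<Rightarrow> ('a \<times> 'a) set \<Rightarrow> 'b set \<Rightarrow> ('b \<times> 'b) set \<Rightarrow> ('a,'b) F2sol \<Rightarrow> ('a,'b) F1sol" where
  "add_slacks V1 E1 V2 E2 = (\<lambda>(x,y). (x, y,
     slack V1 (\<lambda>i. \<Sum>k\<in>V2. x i k), slack V2 (\<lambda>k. \<Sum>i\<in>V1. x i k),
     slack E1 (\<lambda>ij. \<Sum>kl\<in>E2. y ij kl), slack E2 (\<lambda>kl. \<Sum>ij\<in>E1. y ij kl)))"

lemma proj12_add_slacks [simp]: "proj12 (add_slacks V1 E1 V2 E2 p) = p"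
  by (cases p) (simp add: add_slacks_def proj12_def)

lemma add_slacks_proj12:
  assumes "(x,y,u,v,e,f) \<in> F1_feasible V1 E1 V2 E2"
  shows "add_slacks V1 E1 V2 E2 (proj12 (x,y,u,v,e,f)) = (x,y,u,v,e,f)"
  using assms by (simp add: F1_feasible_def add_slacks_def proj12_def slack_unique)

lemma proj12_F1_feasible:
  assumes "finite V2" "E1 \<subseteq> V1 \<times> V1" "E2 \<subseteq> V2 \<times> V2"
    and s: "(x,y,u,v,e,f) \<in> F1_feasible V1 E1 V2 E2"
  shows "(x,y) \<in> F2_feasible V1 E1 V2 E2"
proof -
  have fin: "finite E2" using assms(1,3) finite_subset by blast
  from s have bx: "binvec2 V1 V2 x" and by': "binvec2 E1 E2 y" and bu: "binvec V1 u"
    and bv: "binvec V2 v" and be: "binvec E1 e"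
    and ru: "\<forall>i\<in>V1. u i + (\<Sum>k\<in>V2. x i k) = 1"
    and rv: "\<forall>k\<in>V2. v k + (\<Sum>i\<in>V1. x i k) = 1"
    and re: "\<forall>ij\<in>E1. e ij + (\<Sum>kl\<in>E2. y ij kl) = 1"
    and yx: "\<forall>(i,j)\<in>E1. \<forall>(k,l)\<in>E2. y (i,j) (k,l) \<le> x i k \<and> y (i,j) (k,l) \<le> x j l"
    by (auto simp: F1_feasible_def)
  note y_nonneg = binvec2_nonneg[OF by']
  have out_sum: "(\<Sum>kl\<in>E2. y ij kl) \<le> 1" if "ij \<in> E1" for ij
    using re be that by (force simp: binvec_def)
  have "(\<Sum>l\<in>{l\<in>V2. (k,l)\<in>E2}. y (i,j) (k,l)) \<le> x i k"
    if "k \<in> V2" "(i,j) \<in> E1" for i j k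
  proof (rule sum_le_binary_bound)
    show "x i k \<in> {0,1}" using bx that assms(2) by (auto simp: binvec2_def)
    show "\<forall>l\<in>{l\<in>V2. (k,l)\<in>E2}. y (i,j) (k,l) \<le> x i k" using yx that by fast
    have "(\<Sum>l\<in>{l\<in>V2. (k,l)\<in>E2}. y (i,j) (k,l)) \<le> (\<Sum>kl\<in>E2. y (i,j) kl)"
      using fin y_nonneg by (intro sum_reindex_le) (auto simp: inj_on_def)
    then show "(\<Sum>l\<in>{l\<in>V2. (k,l)\<in>E2}. y (i,j) (k,l)) \<le> 1" using out_sum that by fastforce
  qed
  moreover have "(\<Sum>k\<in>{k\<in>V2. (k,l)\<in>E2}. y (i,j) (k,l)) \<le> x j l"
    if "l \<in> V2" "(i,j) \<in> E1" for i j l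
  proof (rule sum_le_binary_bound)
    show "x j l \<in> {0,1}" using bx that assms(2) by (auto simp: binvec2_def)
    show "\<forall>k\<in>{k\<in>V2. (k,l)\<in>E2}. y (i,j) (k,l) \<le> x j l" using yx that by fast
    have "(\<Sum>k\<in>{k\<in>V2. (k,l)\<in>E2}. y (i,j) (k,l)) \<le> (\<Sum>kl\<in>E2. y (i,j) kl)"
      using fin y_nonneg by (intro sum_reindex_le) (auto simp: inj_on_def)
    then show "(\<Sum>k\<in>{k\<in>V2. (k,l)\<in>E2}. y (i,j) (k,l)) \<le> 1" using out_sum that by fastforce
  qed
  moreover have "\<forall>i\<in>V1. (\<Sum>k\<in>V2. x i k) \<le> 1" using ru bu by (force simp: binvec_def)
  moreover have "\<forall>k\<in>V2. (\<Sum>i\<in>V1. x i k) \<le> 1" using rv bv by (force simp: binvec_def)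
  ultimately show ?thesis using bx by' by (auto simp: F2_feasible_def)
qed

lemma add_slacks_F2_feasible:
  assumes fin: "finite V1" "finite V2" and E: "E1 \<subseteq> V1 \<times> V1" "E2 \<subseteq> V2 \<times> V2"
    and s: "(x,y) \<in> F2_feasible V1 E1 V2 E2"
  shows "add_slacks V1 E1 V2 E2 (x,y) \<in> F1_feasible V1 E1 V2 E2"
proof -
  have finE1: "finite E1" using fin(1) E(1) finite_subset by blast
  have finE2: "finite E2" using fin(2) E(2) finite_subset by blast
  from s have bx: "binvec2 V1 V2 x" and by': "binvec2 E1 E2 y"
    and row: "\<forall>i\<in>V1. (\<Sum>k\<in>V2. x i k) \<le> 1"
    and col: "\<forall>k\<in>V2. (\<Sum>i\<in>V1. x i k) \<le> 1"
    and out: "\<forall>k\<in>V2. \<forall>(i,j)\<in>E1. (\<Sum>l\<in>{l\<in>V2. (k,l)\<in>E2}. y (i,j) (k,l)) \<le> x i k"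
    and inc: "\<forall>l\<in>V2. \<forall>(i,j)\<in>E1. (\<Sum>k\<in>{k\<in>V2. (k,l)\<in>E2}. y (i,j) (k,l)) \<le> x j l"
    by (auto simp: F2_feasible_def)
  have x01: "x i k \<in> {0,1}" if "i \<in> V1" "k \<in> V2" for i k
    using bx that by (auto simp: binvec2_def)
  have y01: "y ij kl \<in> {0,1}" if "ij \<in> E1" "kl \<in> E2" for ij kl
    using by' that by (auto simp: binvec2_def)
  note x_nonneg = binvec2_nonneg[OF bx] and y_nonneg = binvec2_nonneg[OF by']
  have yx: "y (i,j) (k,l) \<le> x i k \<and> y (i,j) (k,l) \<le> x j l" if "(i,j) \<in> E1" "(k,l) \<in> E2" for i j k l
  proof
    have "y (i,j) (k,l) \<le> (\<Sum>l'\<in>{l'\<in>V2. (k,l')\<in>E2}. y (i,j) (k,l'))"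
      using fin(2) E(2) that y_nonneg by (intro member_le_sum) auto
    then show "y (i,j) (k,l) \<le> x i k" using out that E(2) by fastforce
    have "y (i,j) (k,l) \<le> (\<Sum>k'\<in>{k'\<in>V2. (k',l)\<in>E2}. y (i,j) (k',l))"
      using fin(2) E(2) that y_nonneg by (intro member_le_sum[where f="\<lambda>k'. y (i,j) (k',l)"]) auto
    then show "y (i,j) (k,l) \<le> x j l" using inc that E(2) by fastforce
  qed
  have out_sum: "(\<Sum>kl\<in>E2. y (i,j) kl) \<le> 1" if "(i,j) \<in> E1" for i j
  proof -
    have "(\<Sum>kl\<in>E2. y (i,j) kl) = (\<Sum>k\<in>V2. \<Sum>l\<in>{l\<in>V2. (k,l)\<in>E2}. y (i,j) (k,l))"
      using sum_edges_by_tail[OF fin(2) E(2)] .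
    also have "\<dots> \<le> (\<Sum>k\<in>V2. x i k)" using out that by (intro sum_mono) auto
    also have "\<dots> \<le> 1" using row that E(1) by auto
    finally show ?thesis .
  qed
  have in_sum: "(\<Sum>ij\<in>E1. y ij (k,l)) \<le> 1" if "(k,l) \<in> E2" for k l
  proof -
    have kl: "k \<in> V2" "l \<in> V2" using that E(2) by auto
    have "(\<Sum>ij\<in>E1. y ij (k,l)) \<le> (\<Sum>(i,j)\<in>E1. x i k * x j l)"
    proof (rule sum_mono, clarify)
      fix i j assume ij: "(i,j) \<in> E1"
      then have "x i k \<in> {0,1}" "x j l \<in> {0,1}" "y (i,j) (k,l) \<in> {0,1}"
        using E(1) kl that x01 y01 by blast+
      with yx[OF ij that] show "y (i,j) (k,l) \<le> x i k * x j l" by auto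
    qed
    also have "\<dots> \<le> (\<Sum>i\<in>V1. x i k) * (\<Sum>j\<in>V1. x j l)"
      using fin(1) E(1) x_nonneg by (intro sum_edges_product_le) auto
    also have "\<dots> \<le> 1" using col kl by (intro mult_le_one) (auto intro: sum_nonneg x_nonneg)
    finally show ?thesis .
  qed
  have "binvec V1 (slack V1 (\<lambda>i. \<Sum>k\<in>V2. x i k))"
    by (intro binvec_slack ballI sum_binary_le_one_in_01) (use fin row x01 in auto)
  moreover have "binvec V2 (slack V2 (\<lambda>k. \<Sum>i\<in>V1. x i k))"
    by (intro binvec_slack ballI sum_binary_le_one_in_01) (use fin col x01 in auto)
  moreover have "binvec E1 (slack E1 (\<lambda>ij. \<Sum>kl\<in>E2. y ij kl))"
    by (intro binvec_slack ballI sum_binary_le_one_in_01) (use finE2 out_sum y01 in auto)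
  moreover have "binvec E2 (slack E2 (\<lambda>kl. \<Sum>ij\<in>E1. y ij kl))"
    by (intro binvec_slack ballI sum_binary_le_one_in_01) (use finE1 in_sum y01 in auto)
  ultimately show ?thesis
    using bx by' yx by (auto simp: F1_feasible_def add_slacks_def slack_def)
qed

lemma sum_mult_slack: "(\<Sum>t\<in>I. c t * slack I s t) = sum c I - (\<Sum>t\<in>I. c t * s t)"
  by (simp add: slack_def right_diff_distrib sum_subtractf)

lemma F1_obj_add_slacks:
  "F1_obj V1 E1 V2 E2 cs ce dv iv de ie (add_slacks V1 E1 V2 E2 (x,y))
     = F2_obj V1 E1 V2 E2 cs ce dv iv de ie (x,y)"
proof -
  have swap_x: "(\<Sum>k\<in>V2. iv k * (\<Sum>i\<in>V1. x i k)) = (\<Sum>i\<in>V1. \<Sum>k\<in>V2. iv k * x i k)"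
    by (simp add: sum_distrib_left sum.swap[of _ V1 V2])
  have swap_y: "(\<Sum>kl\<in>E2. ie kl * (\<Sum>ij\<in>E1. y ij kl)) = (\<Sum>ij\<in>E1. \<Sum>kl\<in>E2. ie kl * y ij kl)"
    by (simp add: sum_distrib_left sum.swap[of _ E1 E2])
  have "F1_obj V1 E1 V2 E2 cs ce dv iv de ie (add_slacks V1 E1 V2 E2 (x,y))
      = (\<Sum>i\<in>V1. \<Sum>k\<in>V2. cs i k * x i k) + (\<Sum>ij\<in>E1. \<Sum>kl\<in>E2. ce ij kl * y ij kl)
      + (sum dv V1 - (\<Sum>i\<in>V1. \<Sum>k\<in>V2. dv i * x i k))
      + (sum iv V2 - (\<Sum>k\<in>V2. iv k * (\<Sum>i\<in>V1. x i k)))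
      + (sum de E1 - (\<Sum>ij\<in>E1. \<Sum>kl\<in>E2. de ij * y ij kl))
      + (sum ie E2 - (\<Sum>kl\<in>E2. ie kl * (\<Sum>ij\<in>E1. y ij kl)))"
    by (simp only: F1_obj_def add_slacks_def split sum_mult_slack sum_distrib_left)
  also have "\<dots> = F2_obj V1 E1 V2 E2 cs ce dv iv de ie (x,y)"
    unfolding swap_x swap_y F2_obj_def by (simp add: left_diff_distrib sum_subtractf)
  finally show ?thesis .
qed

theorem mainTheorem4:
  fixes V1 :: "'a set" and E1 :: "('a \<times> 'a) set" and V2 :: "'b set" and E2 :: "('b \<times> 'b) set"
    and cs :: "'a \<Rightarrow> 'b \<Rightarrow> real" and ce :: "'a \<times> 'a \<Rightarrow> 'b \<times> 'b \<Rightarrow> real"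
    and dv :: "'a \<Rightarrow> real" and iv :: "'b \<Rightarrow> real"
    and de :: "'a \<times> 'a \<Rightarrow> real" and ie :: "'b \<times> 'b \<Rightarrow> real"
  assumes "simple_digraph V1 E1" and "simple_digraph V2 E2"
  shows "bij_betw proj12 (F1_feasible V1 E1 V2 E2) (F2_feasible V1 E1 V2 E2)
    \<and> (\<forall>s\<in>F1_feasible V1 E1 V2 E2.
         F2_obj V1 E1 V2 E2 cs ce dv iv de ie (proj12 s) = F1_obj V1 E1 V2 E2 cs ce dv iv de ie s)
    \<and> Min (F1_obj V1 E1 V2 E2 cs ce dv iv de ie ` F1_feasible V1 E1 V2 E2)
      = Min (F2_obj V1 E1 V2 E2 cs ce dv iv de ie ` F2_feasible V1 E1 V2 E2)"
proof -
  let ?F1 = "F1_feasible V1 E1 V2 E2" and ?F2 = "F2_feasible V1 E1 V2 E2"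
  let ?o1 = "F1_obj V1 E1 V2 E2 cs ce dv iv de ie" and ?o2 = "F2_obj V1 E1 V2 E2 cs ce dv iv de ie"
  have graphs: "finite V1" "finite V2" "E1 \<subseteq> V1 \<times> V1" "E2 \<subseteq> V2 \<times> V2"
    using assms by (auto simp: simple_digraph_def)
  have lift_proj: "\<forall>s\<in>?F1. add_slacks V1 E1 V2 E2 (proj12 s) = s"
    using add_slacks_proj12 by fast
  have bij: "bij_betw proj12 ?F1 ?F2"
  proof (rule bij_betw_byWitness[where f' = "add_slacks V1 E1 V2 E2"])
    show "proj12 ` ?F1 \<subseteq> ?F2"
      using proj12_F1_feasible[OF graphs(2-4)] by (force simp: proj12_def)
    show "add_slacks V1 E1 V2 E2 ` ?F2 \<subseteq> ?F1"
      using add_slacks_F2_feasible[OF graphs] by force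
  qed (simp_all add: lift_proj)
  have obj: "\<forall>s\<in>?F1. ?o2 (proj12 s) = ?o1 s"
    by (metis lift_proj F1_obj_add_slacks surj_pair)
  have "?o1 ` ?F1 = ?o2 ` proj12 ` ?F1"
    using obj by (force simp: image_image intro: image_cong)
  also have "\<dots> = ?o2 ` ?F2" using bij by (simp add: bij_betw_def)
  finally have "?o1 ` ?F1 = ?o2 ` ?F2" .
  then show ?thesis using bij obj by simp
qed

end
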